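(* Let $X\subseteq U$ with $|X|=m$ and let $q\in U\setminus X$. Suppose $X$ is represented by a Bloom filter using $k$ independent simple tabulation hash functions $h_0,\dots,h_{k-1}:U\to[n]$: there are $k$ bit arrays $A_0,\dots,A_{k-1}$ of $n$ bits each, initially $0$; for each $x\in X$ and $i\in[k]$ bit $h_i(x)$ of $A_i$ is set to $1$; the query "is $q\in X$" answers yes iff bit $h_i(q)$ of $A_i$ equals $1$ for all $i\in[k]$. Then the probability of a false positive when querying $q$ (i.e., answering yes) is at most $$\left(p_0+\frac{2m^{2-1/c}}{n^2}\right)^k.$$
   Context: Simple tabulation hashing: the key universe is $U=[u]$, each key $x\in U$ is viewed as a vector $(x[0],\dots,x[c-1])$ of $c=O(1)$ characters from $\Sigma=[u^{1/c}]$; the range is $[n]=[2^r]$. A simple tabulation hash function is $h(x)=g_0(x[0])\oplus\cdots\oplus g_{c-1}(x[c-1])$ with $g_0,\dots,g_{c-1}:\Sigma\to[2^r]$ independent fully random functions and $\oplus$ bitwise XOR. $p_0=1-(1-1/n)^m$. *)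

theory Defs
  imports "HOL-Probability.Probability"
begin

text \<open>Keys of U = [sigma^c] are vectors of c characters from Sigma = [sigma],
  represented as extensional functions on {..<c}.\<close>
definition keys :: "nat \<Rightarrow> nat \<Rightarrow> (nat \<Rightarrow> nat) set" where
  "keys c \<sigma> = PiE {..<c} (\<lambda>_. {..<\<sigma>})"

definition tab_tables :: "nat \<Rightarrow> nat \<Rightarrow> nat \<Rightarrow> (nat \<Rightarrow> nat \<Rightarrow> nat) set" where
  "tab_tables c \<sigma> r = PiE {..<c} (\<lambda>_. PiE {..<\<sigma>} (\<lambda>_. {..<2^r}))"

definition tab_hash :: "nat \<Rightarrow> (nat \<Rightarrow> nat \<Rightarrow> nat) \<Rightarrow> (nat \<Rightarrow> nat) \<Rightarrow> nat" where
  "tab_hash c g x = foldr (\<lambda>j acc. Bit_Operations.xor (g j (x j)) acc) [0..<c] 0"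

definition tab_family :: "nat \<Rightarrow> nat \<Rightarrow> nat \<Rightarrow> nat \<Rightarrow> (nat \<Rightarrow> nat \<Rightarrow> nat \<Rightarrow> nat) pmf" where
  "tab_family k c \<sigma> r = pmf_of_set (PiE {..<k} (\<lambda>_. tab_tables c \<sigma> r))"

definition bloom_array :: "nat \<Rightarrow> (nat \<Rightarrow> nat \<Rightarrow> nat \<Rightarrow> nat) \<Rightarrow> (nat \<Rightarrow> nat) set \<Rightarrow> nat \<Rightarrow> nat \<Rightarrow> bool" where
  "bloom_array c G X i b = (\<exists>x\<in>X. tab_hash c (G i) x = b)"

definition bloom_query :: "nat \<Rightarrow> nat \<Rightarrow> (nat \<Rightarrow> nat \<Rightarrow> nat \<Rightarrow> nat) \<Rightarrow> (nat \<Rightarrow> nat) set \<Rightarrow> (nat \<Rightarrow> nat) \<Rightarrow> bool" where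
  "bloom_query k c G X q = (\<forall>i<k. bloom_array c G X i (tab_hash c (G i) q))"

end

theory Submission
  imports Defs
begin

(*
  View the c tables as a single fully random function g on the cells (j, a) of [c] x Sigma.
  The key x collides with q iff h(x) = h(q), an event that depends only on the cells probed by
  x and q.  Rank the cells so that those of q come first and the others by decreasing number of
  keys of X through them, and charge every key x to its highest-ranked probed cell; this is one
  of its own cells (j, x j) with x j ~= q j.  Revealing the cells in increasing rank, a key is
  decided when its top cell is revealed, and then at most one of the n = 2^r values of that cell
  makes it collide.  Hence no key collides with probability at least prod_i (1 - k_i/n), where
  k_i keys are charged to cell i, and a second-order Bonferroni bound turns this into
  (1 - 1/n)^m - sum_i k_i (k_i - 1) / (2 n^2).  The keys charged to a cell (j, a) share the
  character a, and in every other position j' they use, apart from q j', only characters of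
  degree at least deg(j, a); this forces k_i^c <= (2m)^(c-1), whence
  sum_i k_i (k_i - 1) / 2 <= m^(2-1/c).
  The k hash functions of the Bloom filter are independent, so the false-positive probability
  is the k-th power of the collision probability for one function.
*)

lemma tab_hash_Suc: "tab_hash (Suc c) G x = xor (tab_hash c G x) (G c (x c))"
proof -
  have acc: "foldr (\<lambda>j acc. xor (G j (x j)) acc) js a
      = xor (foldr (\<lambda>j acc. xor (G j (x j)) acc) js 0) (a::nat)" for js a
    by (induction js) (simp_all add: xor.assoc)
  show ?thesis
    unfolding tab_hash_def by (simp add: acc[of _ "G c (x c)"])
qed

lemma tab_hash_cong:
  "(\<And>j. j < c \<Longrightarrow> G j (x j) = G' j (x j)) \<Longrightarrow> tab_hash c G x = tab_hash c G' x"
  by (induction c) (simp_all add: tab_hash_def[of 0] tab_hash_Suc)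

lemma xor_tab_hash_eq_xor_entry:
  assumes "j < c" and "\<And>j'. j' < c \<Longrightarrow> j' \<noteq> j \<Longrightarrow> G j' (x j') = G' j' (x j')"
  shows "xor (tab_hash c G x) (tab_hash c G' x) = xor (G j (x j)) (G' j (x j))"
  using assms
proof (induction c)
  case 0
  then show ?case by simp
next
  case (Suc c)
  have step: "xor (tab_hash (Suc c) G x) (tab_hash (Suc c) G' x)
      = xor (xor (tab_hash c G x) (tab_hash c G' x)) (xor (G c (x c)) (G' c (x c)))"
    by (simp add: tab_hash_Suc xor.assoc xor.left_commute)
  show ?case
  proof (cases "j = c")
    case True
    have "tab_hash c G x = tab_hash c G' x"
      using Suc.prems True by (intro tab_hash_cong) auto
    then show ?thesis using step True by simp
  next
    case False
    then show ?thesis using Suc step by simp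
  qed
qed

lemma xor_eq_0_imp_eq: "xor (a::nat) b = 0 \<Longrightarrow> a = b"
  by (metis xor.assoc xor.right_neutral xor_self_eq)

lemma bij_betw_uncurry_PiE:
  "bij_betw (\<lambda>g. \<lambda>j\<in>A. \<lambda>a\<in>B. g (j, a)) (PiE (A \<times> B) (\<lambda>_. T)) (PiE A (\<lambda>_. PiE B (\<lambda>_. T)))"
  by (rule bij_betw_byWitness[where f' = "\<lambda>G. \<lambda>p\<in>A \<times> B. G (fst p) (snd p)"])
     (auto simp: PiE_iff extensional_def fun_eq_iff split: if_splits)

lemma card_PiE_insert_filter:
  assumes "finite S" "a \<notin> S" "\<And>i. finite (T i)"
  shows "card {g \<in> PiE (insert a S) T. P g} = (\<Sum>g\<in>PiE S T. card {y \<in> T a. P (g(a := y))})"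
proof -
  let ?upd = "\<lambda>(g, y). g(a := y)"
  let ?A = "Sigma (PiE S T) (\<lambda>g. {y \<in> T a. P (g(a := y))})"
  have "inj_on ((\<lambda>(y, g). g(a := y)) \<circ> prod.swap) (PiE S T \<times> T a)"
    using inj_combinator[OF assms(2), of T] by (intro comp_inj_on) (simp_all add: product_swap)
  then have "inj_on ?upd (PiE S T \<times> T a)"
    by (simp add: o_def case_prod_unfold)
  then have inj: "inj_on ?upd ?A"
    by (rule inj_on_subset) blast
  have "{g \<in> PiE (insert a S) T. P g} = ?upd ` ?A"
    unfolding PiE_insert_eq by force
  then have "card {g \<in> PiE (insert a S) T. P g} = card ?A"
    using inj by (simp add: card_image)
  also have "\<dots> = (\<Sum>g\<in>PiE S T. card {y \<in> T a. P (g(a := y))})"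
    using assms by (intro card_SigmaI) (auto simp: finite_PiE)
  finally show ?thesis .
qed

lemma card_diff_le_card_avoiding:
  assumes "finite V" "finite K" "\<And>x. x \<in> K \<Longrightarrow> card {v \<in> V. B x v} \<le> 1"
  shows "card V - card K \<le> card {v \<in> V. \<forall>x\<in>K. \<not> B x v}"
proof -
  let ?good = "{v \<in> V. \<forall>x\<in>K. \<not> B x v}" and ?bad = "\<Union>x\<in>K. {v \<in> V. B x v}"
  have "V \<subseteq> ?good \<union> ?bad"
    by auto
  then have "card V \<le> card (?good \<union> ?bad)"
    using assms(1,2) by (intro card_mono) auto
  also have "\<dots> \<le> card ?good + card ?bad"
    by (rule card_Un_le)
  also have "card ?bad \<le> (\<Sum>x\<in>K. card {v \<in> V. B x v})"
    by (rule card_UN_le[OF assms(2)])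
  also have "\<dots> \<le> card K"
    using sum_mono[of K "\<lambda>x. card {v \<in> V. B x v}" "\<lambda>_. 1"] assms(3) by simp
  finally show ?thesis by linarith
qed

definition maximal_at :: "'x set \<Rightarrow> ('x \<Rightarrow> 'i set) \<Rightarrow> ('i \<Rightarrow> 'r::linorder) \<Rightarrow> 'i \<Rightarrow> 'x set" where
  "maximal_at X D \<rho> i = {x \<in> X. i \<in> D x \<and> (\<forall>j\<in>D x. \<rho> j \<le> \<rho> i)}"

lemma maximal_at_mono: "Y \<subseteq> X \<Longrightarrow> maximal_at Y D \<rho> i \<subseteq> maximal_at X D \<rho> i"
  unfolding maximal_at_def by blast

lemma finite_maximal_at: "finite X \<Longrightarrow> finite (maximal_at X D \<rho> i)"
  by (simp add: maximal_at_def)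

lemma card_PiE_avoiding_insert_ge:
  fixes \<rho> :: "'i \<Rightarrow> 'r::linorder" and bad :: "'x \<Rightarrow> ('i \<Rightarrow> 'v) \<Rightarrow> bool"
  assumes "finite J" "i0 \<notin> J" "finite V" "finite Y"
    and cells: "\<And>x. x \<in> Y \<Longrightarrow> D x \<subseteq> insert i0 J"
    and top: "\<And>j. j \<in> J \<Longrightarrow> \<rho> j \<le> \<rho> i0"
    and local: "\<And>x g g'. x \<in> Y \<Longrightarrow> (\<forall>i\<in>D x. g i = g' i) \<Longrightarrow> bad x g = bad x g'"
    and pinned: "\<And>x i g v v'. x \<in> Y \<Longrightarrow> i \<in> D x \<Longrightarrow> (\<forall>j\<in>D x. \<rho> j \<le> \<rho> i) \<Longrightarrow>
      bad x (g(i := v)) \<Longrightarrow> bad x (g(i := v')) \<Longrightarrow> v = v'"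
  shows "card {g \<in> PiE J (\<lambda>_. V). \<forall>x\<in>{x \<in> Y. i0 \<notin> D x}. \<not> bad x g} * (card V - card (maximal_at Y D \<rho> i0))
    \<le> card {g \<in> PiE (insert i0 J) (\<lambda>_. V). \<forall>x\<in>Y. \<not> bad x g}"
proof -
  let ?K = "maximal_at Y D \<rho> i0"
  let ?G = "{g \<in> PiE J (\<lambda>_. V). \<forall>x\<in>{x \<in> Y. i0 \<notin> D x}. \<not> bad x g}"
  have avoid_K: "card V - card ?K \<le> card {v \<in> V. \<forall>x\<in>Y. \<not> bad x (g(i0 := v))}" if "g \<in> ?G" for g
  proof -
    have "card V - card ?K \<le> card {v \<in> V. \<forall>x\<in>?K. \<not> bad x (g(i0 := v))}"
    proof (rule card_diff_le_card_avoiding[OF \<open>finite V\<close> finite_maximal_at[OF \<open>finite Y\<close>]])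
      fix x assume "x \<in> ?K"
      then have "\<forall>v\<in>{v \<in> V. bad x (g(i0 := v))}. \<forall>v'\<in>{v \<in> V. bad x (g(i0 := v))}. v = v'"
        using pinned unfolding maximal_at_def by blast
      then show "card {v \<in> V. bad x (g(i0 := v))} \<le> 1"
        using card_le_Suc0_iff_eq[of "{v \<in> V. bad x (g(i0 := v))}"] \<open>finite V\<close> by simp
    qed
    also have "\<dots> = card {v \<in> V. \<forall>x\<in>Y. \<not> bad x (g(i0 := v))}"
    proof -
      have "\<not> bad x (g(i0 := v))" if "x \<in> Y" "i0 \<notin> D x" for x v
        using local[of x "g(i0 := v)" g] \<open>g \<in> ?G\<close> that by auto
      moreover have "x \<in> ?K" if "x \<in> Y" "i0 \<in> D x" for x
        using that cells top unfolding maximal_at_def by fastforce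
      ultimately have "(\<forall>x\<in>?K. \<not> bad x (g(i0 := v))) \<longleftrightarrow> (\<forall>x\<in>Y. \<not> bad x (g(i0 := v)))" for v
        unfolding maximal_at_def by blast
      then show ?thesis
        by simp
    qed
    finally show ?thesis .
  qed
  have "card ?G * (card V - card ?K) = (\<Sum>g\<in>?G. card V - card ?K)"
    by simp
  also have "\<dots> \<le> (\<Sum>g\<in>?G. card {v \<in> V. \<forall>x\<in>Y. \<not> bad x (g(i0 := v))})"
    by (rule sum_mono) (rule avoid_K)
  also have "\<dots> \<le> (\<Sum>g\<in>PiE J (\<lambda>_. V). card {v \<in> V. \<forall>x\<in>Y. \<not> bad x (g(i0 := v))})"
    using assms(1,3) by (intro sum_mono2) (simp_all add: finite_PiE)
  also have "\<dots> = card {g \<in> PiE (insert i0 J) (\<lambda>_. V). \<forall>x\<in>Y. \<not> bad x g}"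
    using assms(1-3) by (rule card_PiE_insert_filter[symmetric])
  finally show ?thesis .
qed

lemma card_PiE_avoiding_ge:
  fixes \<rho> :: "'i \<Rightarrow> 'r::linorder" and bad :: "'x \<Rightarrow> ('i \<Rightarrow> 'v) \<Rightarrow> bool"
  assumes "finite I" "finite V" "finite X"
    and cells: "\<And>x. x \<in> X \<Longrightarrow> D x \<subseteq> I \<and> D x \<noteq> {}"
    and local: "\<And>x g g'. x \<in> X \<Longrightarrow> (\<forall>i\<in>D x. g i = g' i) \<Longrightarrow> bad x g = bad x g'"
    and pinned: "\<And>x i g v v'. x \<in> X \<Longrightarrow> i \<in> D x \<Longrightarrow> (\<forall>j\<in>D x. \<rho> j \<le> \<rho> i) \<Longrightarrow>
      bad x (g(i := v)) \<Longrightarrow> bad x (g(i := v')) \<Longrightarrow> v = v'"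
  shows "(\<Prod>i\<in>I. card V - card (maximal_at X D \<rho> i)) \<le> card {g \<in> PiE I (\<lambda>_. V). \<forall>x\<in>X. \<not> bad x g}"
proof -
  let ?good = "\<lambda>J Y. {g \<in> PiE J (\<lambda>_. V). \<forall>x\<in>Y. \<not> bad x g}"
  have "\<forall>Y\<subseteq>X. (\<forall>x\<in>Y. D x \<subseteq> J) \<longrightarrow> (\<Prod>i\<in>J. card V - card (maximal_at Y D \<rho> i)) \<le> card (?good J Y)"
    if "finite J" for J
    using that
  proof (induction J rule: finite_ranking_induct[where f = \<rho>])
    case empty
    show ?case
    proof (intro allI impI)
      fix Y assume "Y \<subseteq> X" "\<forall>x\<in>Y. D x \<subseteq> {}"
      then have "Y = {}"
        using cells by blast
      then show "(\<Prod>i\<in>{}. card V - card (maximal_at Y D \<rho> i)) \<le> card (?good {} Y)"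
        by (simp add: PiE_empty_domain)
    qed
  next
    case (insert i0 J)
    show ?case
    proof (intro allI impI)
      fix Y assume Y: "Y \<subseteq> X" "\<forall>x\<in>Y. D x \<subseteq> insert i0 J"
      show "(\<Prod>i\<in>insert i0 J. card V - card (maximal_at Y D \<rho> i)) \<le> card (?good (insert i0 J) Y)"
      proof (cases "i0 \<in> J")
        case True
        then show ?thesis
          using insert.IH Y by (simp add: insert_absorb)
      next
        case False
        define Y' where "Y' = {x \<in> Y. i0 \<notin> D x}"
        have "finite Y"
          using Y(1) \<open>finite X\<close> by (rule finite_subset)
        have "card (maximal_at Y' D \<rho> i) \<le> card (maximal_at Y D \<rho> i)" for i
          by (rule card_mono[OF finite_maximal_at[OF \<open>finite Y\<close>] maximal_at_mono]) (simp add: Y'_def)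
        then have "(\<Prod>i\<in>insert i0 J. card V - card (maximal_at Y D \<rho> i))
            \<le> (\<Prod>i\<in>J. card V - card (maximal_at Y' D \<rho> i)) * (card V - card (maximal_at Y D \<rho> i0))"
          using insert.hyps(1) False by (simp add: prod_mono diff_le_mono2)
        also have "\<dots> \<le> card (?good J Y') * (card V - card (maximal_at Y D \<rho> i0))"
        proof (rule mult_le_mono1)
          have "Y' \<subseteq> X" "\<forall>x\<in>Y'. D x \<subseteq> J"
            using Y by (auto simp: Y'_def)
          then show "(\<Prod>i\<in>J. card V - card (maximal_at Y' D \<rho> i)) \<le> card (?good J Y')"
            using insert.IH by blast
        qed
        also have "\<dots> \<le> card (?good (insert i0 J) Y)"
          unfolding Y'_def
          by (rule card_PiE_avoiding_insert_ge[OF insert.hyps(1) False \<open>finite V\<close> \<open>finite Y\<close>])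
             (use Y insert.hyps(2) local pinned in blast)+
        finally show ?thesis .
      qed
    qed
  qed
  then show ?thesis
    using assms(1) cells by blast
qed

lemma power_one_minus_le_quadratic:
  fixes p :: real
  assumes "0 \<le> p" "p \<le> 1"
  shows "(1 - p) ^ k \<le> 1 - k * p + k * (real k - 1) / 2 * p\<^sup>2"
proof (induction k)
  case 0
  then show ?case by simp
next
  case (Suc k)
  have "(1 - p) ^ Suc k \<le> (1 - p) * (1 - k * p + k * (real k - 1) / 2 * p\<^sup>2)"
    using Suc assms by (simp add: mult_left_mono)
  also have "\<dots> = 1 - Suc k * p + Suc k * real k / 2 * p\<^sup>2 - k * (real k - 1) / 2 * p ^ 3"
    by (simp add: field_simps power2_eq_square power3_eq_cube)
  also have "\<dots> \<le> 1 - Suc k * p + Suc k * real k / 2 * p\<^sup>2"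
    using assms by (cases k) auto
  finally show ?case
    by simp
qed

lemma power_one_minus_inverse_le:
  assumes "n \<ge> 1"
  shows "(1 - 1 / real n) ^ k \<le> real (n - k) / n + k * (real k - 1) / (2 * (real n)\<^sup>2)"
proof -
  have "(1 - 1 / real n) ^ k \<le> 1 - k / n + k * (real k - 1) / (2 * (real n)\<^sup>2)"
    using power_one_minus_le_quadratic[of "1 / real n" k] assms by (simp add: power2_eq_square)
  moreover have "1 - k / n \<le> real (n - k) / n"
    using assms by (cases "k \<le> n") (simp_all add: of_nat_diff diff_divide_distrib)
  ultimately show ?thesis
    by linarith
qed

lemma prod_le_prod_plus_sum:
  fixes a b e :: "'i \<Rightarrow> real"
  assumes "finite I"
    and "\<And>i. i \<in> I \<Longrightarrow> 0 \<le> a i \<and> a i \<le> 1 \<and> 0 \<le> b i \<and> b i \<le> 1 \<and> 0 \<le> e i \<and> b i \<le> a i + e i"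
  shows "(\<Prod>i\<in>I. b i) \<le> (\<Prod>i\<in>I. a i) + (\<Sum>i\<in>I. e i)"
  using assms
proof (induction I rule: finite_induct)
  case empty
  then show ?case by simp
next
  case (insert j I)
  let ?A = "\<Prod>i\<in>I. a i" and ?B = "\<Prod>i\<in>I. b i" and ?E = "\<Sum>i\<in>I. e i"
  have B: "0 \<le> ?B" "?B \<le> 1" and E: "0 \<le> ?E"
    using insert.prems by (auto intro: prod_nonneg prod_le_1 sum_nonneg)
  have j: "0 \<le> a j" "a j \<le> 1" "0 \<le> b j" "b j \<le> a j + e j" "0 \<le> e j"
    using insert.prems by auto
  have "b j * ?B \<le> (a j + e j) * ?B"
    using j B by (intro mult_right_mono) auto
  also have "\<dots> \<le> a j * ?B + e j"
    using j B by (simp add: distrib_right mult_left_le)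
  also have "a j * ?B \<le> a j * (?A + ?E)"
    using insert j by (intro mult_left_mono) auto
  also have "\<dots> \<le> a j * ?A + ?E"
    using j E by (simp add: distrib_left mult_left_le_one_le)
  finally show ?case
    using insert.hyps by (simp add: algebra_simps)
qed

lemma power_sum_le_prod_plus_sum:
  fixes k :: "'i \<Rightarrow> nat"
  assumes "finite I" "n \<ge> 1"
  shows "(1 - 1 / real n) ^ (\<Sum>i\<in>I. k i)
    \<le> (\<Prod>i\<in>I. real (n - k i) / n) + (\<Sum>i\<in>I. k i * (real (k i) - 1) / (2 * (real n)\<^sup>2))"
proof -
  have "(1 - 1 / real n) ^ (\<Sum>i\<in>I. k i) = (\<Prod>i\<in>I. (1 - 1 / real n) ^ k i)"
    by (rule power_sum)
  also have "\<dots> \<le> (\<Prod>i\<in>I. real (n - k i) / n) + (\<Sum>i\<in>I. k i * (real (k i) - 1) / (2 * (real n)\<^sup>2))"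
  proof (rule prod_le_prod_plus_sum[OF assms(1)])
    fix i
    have "0 \<le> 1 - 1 / real n" "1 - 1 / real n \<le> 1"
      using assms(2) by auto
    moreover have "0 \<le> real (k i) * (real (k i) - 1)"
      by (cases "k i") auto
    ultimately show "0 \<le> real (n - k i) / n \<and> real (n - k i) / n \<le> 1 \<and>
        0 \<le> (1 - 1 / real n) ^ k i \<and> (1 - 1 / real n) ^ k i \<le> 1 \<and>
        0 \<le> k i * (real (k i) - 1) / (2 * (real n)\<^sup>2) \<and>
        (1 - 1 / real n) ^ k i \<le> real (n - k i) / n + k i * (real (k i) - 1) / (2 * (real n)\<^sup>2)"
      using power_one_minus_inverse_le[OF assms(2)] assms(2) by (auto simp: power_le_one)
  qed
  finally show ?thesis .
qed

lemma pairs_le_mult_powr: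
  fixes k m c :: nat
  assumes "c \<ge> 1" and "k ^ c \<le> (2 * m) ^ (c - 1)"
  shows "k * (real k - 1) / 2 \<le> k * real m powr (1 - 1 / c)"
proof (cases "k \<le> 1")
  case True
  then show ?thesis
    by (cases k) auto
next
  case False
  then have "c \<ge> 2"
    using assms by (cases "c = 1") auto
  with False assms(2) have "m \<ge> 1"
    by (cases m) (auto simp: power_0_left)
  have "real k ^ c \<le> (2 * real m) ^ (c - 1)"
    using assms(2) by (metis of_nat_le_iff of_nat_mult of_nat_numeral of_nat_power)
  also have "\<dots> \<le> 2 ^ c * real m ^ (c - 1)"
    unfolding power_mult_distrib by (intro mult_right_mono power_increasing) auto
  also have "\<dots> = (2 * real m powr (1 - 1 / c)) ^ c"
  proof -
    have "c * (1 - 1 / real c) = real (c - 1)"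
      using assms(1) by (simp add: field_simps of_nat_diff)
    then have "(real m powr (1 - 1 / c)) ^ c = real m powr real (c - 1)"
      using \<open>m \<ge> 1\<close> by (simp add: powr_power)
    also have "\<dots> = real m ^ (c - 1)"
      using \<open>m \<ge> 1\<close> by (simp add: powr_realpow)
    finally have "(real m powr (1 - 1 / c)) ^ c = real m ^ (c - 1)" .
    then show ?thesis
      by (simp add: power_mult_distrib)
  qed
  finally have "real k ^ c \<le> (2 * real m powr (1 - 1 / c)) ^ c" .
  moreover have "0 \<le> 2 * real m powr (1 - 1 / c)" "0 < c"
    using assms(1) by auto
  ultimately have "real k \<le> 2 * real m powr (1 - 1 / c)"
    using power_mono_iff[OF of_nat_0_le_iff] by blast
  then have "k * (real k - 1) \<le> k * (2 * real m powr (1 - 1 / c))"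
    by (intro mult_left_mono) auto
  then show ?thesis
    by simp
qed

lemma card_le_prod_card_coordinates:
  assumes "finite J" "inj_on (\<lambda>y. restrict y J) Y"
  shows "card Y \<le> (\<Prod>j\<in>J. card ((\<lambda>y. y j) ` Y))"
proof (cases "finite Y")
  case True
  have "card Y = card ((\<lambda>y. restrict y J) ` Y)"
    using assms(2) by (simp add: card_image)
  also have "\<dots> \<le> card (PiE J (\<lambda>j. (\<lambda>y. y j) ` Y))"
    using assms(1) True by (intro card_mono) (auto simp: finite_PiE)
  also have "\<dots> = (\<Prod>j\<in>J. card ((\<lambda>y. y j) ` Y))"
    using assms(1) by (rule card_PiE)
  finally show ?thesis .
qed simp

lemma card_mult_le_card_fibres:
  assumes "finite X" "\<And>b. b \<in> B \<Longrightarrow> d \<le> card {x \<in> X. f x = b}"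
  shows "card B * d \<le> card X"
proof (cases "finite B")
  case True
  have "card B * d \<le> (\<Sum>b\<in>B. card {x \<in> X. f x = b})"
    using assms(2) sum_mono[of B "\<lambda>_. d"] by simp
  also have "\<dots> = card (\<Union>b\<in>B. {x \<in> X. f x = b})"
    using True assms(1) by (intro card_UN_disjoint[symmetric]) auto
  also have "\<dots> \<le> card X"
    using assms(1) by (intro card_mono) auto
  finally show ?thesis .
qed simp

locale tabulation_query =
  fixes c \<sigma> :: nat and X :: "(nat \<Rightarrow> nat) set" and q :: "nat \<Rightarrow> nat"
  assumes c_pos: "c \<ge> 1" and X_keys: "X \<subseteq> keys c \<sigma>" and q_key: "q \<in> keys c \<sigma>"
    and q_notin_X: "q \<notin> X"
begin

definition cells :: "(nat \<times> nat) set" where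
  "cells = {..<c} \<times> {..<\<sigma>}"

definition deg :: "nat \<Rightarrow> nat \<Rightarrow> nat" where
  "deg j \<alpha> = card {x \<in> X. x j = \<alpha>}"

definition priority :: "nat \<times> nat \<Rightarrow> nat" where
  "priority = (\<lambda>(j, \<alpha>). if \<alpha> = q j then 0 else Suc (card X) - deg j \<alpha>)"

(* The summand j * sigma + a < c * sigma only breaks ties between cells of equal priority,
   which makes rank injective on the cells. *)
definition rank :: "nat \<times> nat \<Rightarrow> nat" where
  "rank = (\<lambda>(j, \<alpha>). priority (j, \<alpha>) * (c * \<sigma>) + (j * \<sigma> + \<alpha>))"

definition probed :: "(nat \<Rightarrow> nat) \<Rightarrow> (nat \<times> nat) set" where
  "probed x = (\<lambda>j. (j, x j)) ` {..<c} \<union> (\<lambda>j. (j, q j)) ` {..<c}"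

abbreviation top_keys :: "nat \<times> nat \<Rightarrow> (nat \<Rightarrow> nat) set" where
  "top_keys \<equiv> maximal_at X probed rank"

lemma finite_X: "finite X"
  using X_keys by (rule finite_subset) (simp add: keys_def finite_PiE)

lemma key_char_lt: "x \<in> keys c \<sigma> \<Longrightarrow> j < c \<Longrightarrow> x j < \<sigma>"
  by (auto simp: keys_def)

lemma key_differs:
  assumes "x \<in> X"
  obtains j where "j < c" "x j \<noteq> q j"
proof -
  have "x \<noteq> q"
    using assms q_notin_X by blast
  then show ?thesis
    using PiE_ext[of x "{..<c}" "\<lambda>_. {..<\<sigma>}" q] assms X_keys q_key that
    by (auto simp: keys_def)
qed

lemma probed_subset_cells: "x \<in> X \<Longrightarrow> probed x \<subseteq> cells"
  using X_keys q_key key_char_lt by (fastforce simp: probed_def cells_def)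

lemma probed_nonempty: "probed x \<noteq> {}"
proof -
  have "(0, x 0) \<in> probed x"
    using c_pos by (simp add: probed_def)
  then show ?thesis
    by blast
qed

lemma cell_index_lt: "(j, \<alpha>) \<in> cells \<Longrightarrow> j * \<sigma> + \<alpha> < c * \<sigma>"
proof -
  assume "(j, \<alpha>) \<in> cells"
  then have "Suc j \<le> c" "\<alpha> < \<sigma>"
    by (auto simp: cells_def)
  then have "j * \<sigma> + \<alpha> < Suc j * \<sigma>"
    by simp
  also have "\<dots> \<le> c * \<sigma>"
    using \<open>Suc j \<le> c\<close> by (rule mult_right_mono) simp
  finally show ?thesis .
qed

lemma priority_le_of_rank_le:
  assumes "p \<in> cells" "p' \<in> cells" "rank p \<le> rank p'"
  shows "priority p \<le> priority p'"
proof (rule ccontr)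
  assume "\<not> priority p \<le> priority p'"
  then have "Suc (priority p') * (c * \<sigma>) \<le> priority p * (c * \<sigma>)"
    by (intro mult_right_mono) auto
  moreover have "rank p' < Suc (priority p') * (c * \<sigma>)"
    using cell_index_lt[of "fst p'" "snd p'"] assms(2) by (simp add: rank_def case_prod_beta)
  ultimately show False
    using assms(3) by (simp add: rank_def case_prod_beta)
qed

lemma inj_on_rank: "inj_on rank cells"
proof (rule inj_onI)
  fix p p' assume p: "p \<in> cells" "p' \<in> cells" "rank p = rank p'"
  obtain j \<alpha> j' \<alpha>' where [simp]: "p = (j, \<alpha>)" "p' = (j', \<alpha>')"
    by fastforce
  have "rank p mod (c * \<sigma>) = j * \<sigma> + \<alpha>" "rank p' mod (c * \<sigma>) = j' * \<sigma> + \<alpha>'"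
    using cell_index_lt p(1,2) by (simp_all add: rank_def)
  then have eq: "j * \<sigma> + \<alpha> = j' * \<sigma> + \<alpha>'"
    using p(3) by simp
  have "\<alpha> < \<sigma>" "\<alpha>' < \<sigma>"
    using p(1,2) by (auto simp: cells_def)
  have "j = (j * \<sigma> + \<alpha>) div \<sigma>"
    using \<open>\<alpha> < \<sigma>\<close> by simp
  also have "\<dots> = j'"
    using \<open>\<alpha>' < \<sigma>\<close> by (simp only: eq) simp
  finally show "p = p'"
    using eq by simp
qed

lemma deg_le_card: "deg j \<alpha> \<le> card X"
  unfolding deg_def using finite_X by (intro card_mono) auto

lemma top_keysD:
  assumes "x \<in> top_keys i"
  shows "x \<in> X" "i \<in> probed x" "\<And>p. p \<in> probed x \<Longrightarrow> rank p \<le> rank i"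
  using assms by (auto simp: maximal_at_def)

lemma top_cell:
  assumes "x \<in> top_keys i"
  obtains j where "j < c" "i = (j, x j)" "x j \<noteq> q j"
proof -
  note x = top_keysD[OF assms]
  obtain j0 where j0: "j0 < c" "x j0 \<noteq> q j0"
    using key_differs[OF x(1)] .
  then have "(j0, x j0) \<in> probed x"
    by (auto simp: probed_def)
  then have "priority (j0, x j0) \<le> priority i"
    using x probed_subset_cells[OF x(1)] by (intro priority_le_of_rank_le) auto
  moreover have "priority (j0, x j0) > 0"
    using j0 deg_le_card[of j0 "x j0"] by (simp add: priority_def)
  ultimately have "priority i \<noteq> 0"
    by linarith
  moreover obtain j where "j < c" "i = (j, x j) \<or> i = (j, q j)"
    using x(2) by (auto simp: probed_def)
  ultimately have "i = (j, x j)" "x j \<noteq> q j"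
    by (auto simp: priority_def)
  then show ?thesis
    using that \<open>j < c\<close> by blast
qed

lemma top_keys_disjoint:
  assumes "i \<in> cells" "i' \<in> cells" "x \<in> top_keys i" "x \<in> top_keys i'"
  shows "i = i'"
proof -
  have "rank i = rank i'"
    using top_keysD[OF assms(3)] top_keysD[OF assms(4)] by (meson antisym)
  then show ?thesis
    using inj_onD[OF inj_on_rank] assms(1,2) by blast
qed

lemma sum_card_top_keys: "(\<Sum>i\<in>cells. card (top_keys i)) = card X"
proof -
  have "x \<in> (\<Union>i\<in>cells. top_keys i)" if "x \<in> X" for x
  proof -
    have fin: "finite (probed x)"
      by (simp add: probed_def)
    then have "Max (rank ` probed x) \<in> rank ` probed x"
      using probed_nonempty by (intro Max_in) auto
    then obtain i where i: "i \<in> probed x" "rank i = Max (rank ` probed x)"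
      by (metis imageE)
    moreover have "rank p \<le> rank i" if "p \<in> probed x" for p
      using fin that i(2) by simp
    ultimately have "x \<in> top_keys i"
      using that by (simp add: maximal_at_def)
    then show ?thesis
      using i(1) probed_subset_cells[OF that] by blast
  qed
  then have "X = (\<Union>i\<in>cells. top_keys i)"
    using top_keysD(1) by blast
  then have "card X = card (\<Union>i\<in>cells. top_keys i)"
    by (rule arg_cong)
  also have "\<dots> = (\<Sum>i\<in>cells. card (top_keys i))"
  proof (rule card_UN_disjoint)
    show "finite cells"
      by (simp add: cells_def)
    show "\<forall>i\<in>cells. finite (top_keys i)"
      using finite_X by (simp add: finite_maximal_at)
    show "\<forall>i\<in>cells. \<forall>i'\<in>cells. i \<noteq> i' \<longrightarrow> top_keys i \<inter> top_keys i' = {}"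
      using top_keys_disjoint by (meson disjoint_iff)
  qed
  finally show ?thesis
    by (rule sym)
qed

lemma deg_le_deg_of_top:
  assumes "x \<in> top_keys (j, \<alpha>)" "j' < c" "x j' \<noteq> q j'"
  shows "deg j \<alpha> \<le> deg j' (x j')"
proof -
  note x = top_keysD[OF assms(1)]
  have "(j', x j') \<in> probed x"
    using assms(2) by (auto simp: probed_def)
  then have "priority (j', x j') \<le> priority (j, \<alpha>)"
    using x probed_subset_cells[OF x(1)] by (intro priority_le_of_rank_le) auto
  moreover obtain j'' where "(j, \<alpha>) = (j'', x j'')" "x j'' \<noteq> q j''"
    using top_cell[OF assms(1)] by blast
  ultimately have "Suc (card X) - deg j' (x j') \<le> Suc (card X) - deg j \<alpha>"
    using assms(3) by (simp add: priority_def)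
  then show ?thesis
    using deg_le_card[of j \<alpha>] deg_le_card[of j' "x j'"] by arith
qed

lemma card_column_mult_deg_le:
  assumes "j' < c"
  shows "card ((\<lambda>x. x j') ` top_keys (j, \<alpha>)) * deg j \<alpha> \<le> 2 * card X"
proof -
  let ?C = "(\<lambda>x. x j') ` top_keys (j, \<alpha>)"
  have "card (?C - {q j'}) * deg j \<alpha> \<le> card X"
  proof (rule card_mult_le_card_fibres[OF finite_X])
    fix b assume "b \<in> ?C - {q j'}"
    then obtain x where "x \<in> top_keys (j, \<alpha>)" "b = x j'" "x j' \<noteq> q j'"
      by blast
    then show "deg j \<alpha> \<le> card {x \<in> X. x j' = b}"
      using deg_le_deg_of_top assms by (simp add: deg_def)
  qed
  moreover have "card ?C \<le> Suc (card (?C - {q j'}))"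
    using finite_X by (cases "q j' \<in> ?C") (simp_all add: card_Suc_Diff1 finite_maximal_at)
  then have "card ?C * deg j \<alpha> \<le> card (?C - {q j'}) * deg j \<alpha> + deg j \<alpha>"
    using mult_le_mono1[of "card ?C" "Suc (card (?C - {q j'}))" "deg j \<alpha>"] by simp
  ultimately show ?thesis
    using deg_le_card[of j \<alpha>] by linarith
qed

lemma top_keys_column:
  assumes "x \<in> top_keys (j, \<alpha>)"
  shows "x j = \<alpha>"
proof -
  obtain j'' where "j'' < c" "(j, \<alpha>) = (j'', x j'')" "x j'' \<noteq> q j''"
    by (rule top_cell[OF assms])
  then show ?thesis
    by simp
qed

lemma card_top_keys_le_deg: "card (top_keys (j, \<alpha>)) \<le> deg j \<alpha>"
  unfolding deg_def using finite_X top_keysD(1) top_keys_column by (intro card_mono) auto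

lemma inj_on_restrict_top_keys:
  "inj_on (\<lambda>y. restrict y ({..<c} - {j})) (top_keys (j, \<alpha>))"
proof (rule inj_onI)
  fix x y assume x: "x \<in> top_keys (j, \<alpha>)" and y: "y \<in> top_keys (j, \<alpha>)"
    and eq: "restrict x ({..<c} - {j}) = restrict y ({..<c} - {j})"
  have "x j' = y j'" if "j' < c" for j'
  proof (cases "j' = j")
    case True
    then show ?thesis
      using top_keys_column[OF x] top_keys_column[OF y] by simp
  next
    case False
    then show ?thesis
      using fun_cong[OF eq, of j'] that by simp
  qed
  moreover have "x \<in> keys c \<sigma>" "y \<in> keys c \<sigma>"
    using x y top_keysD(1) X_keys by blast+
  ultimately show "x = y"
    by (intro PiE_ext[of x "{..<c}" "\<lambda>_. {..<\<sigma>}"]) (auto simp: keys_def)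
qed

lemma card_top_keys_power_le: "card (top_keys i) ^ c \<le> (2 * card X) ^ (c - 1)"
proof (cases "top_keys i = {}")
  case True
  then show ?thesis
    using c_pos by (simp add: zero_power)
next
  case False
  then obtain x0 where "x0 \<in> top_keys i"
    by blast
  then obtain j where "j < c" and i: "i = (j, x0 j)" and "x0 j \<noteq> q j"
    by (rule top_cell)
  let ?K = "top_keys (j, x0 j)" and ?J = "{..<c} - {j}" and ?d = "deg j (x0 j)"
  have card_J: "card ?J = c - 1"
    using \<open>j < c\<close> by simp
  have "card ?K \<le> (\<Prod>j'\<in>?J. card ((\<lambda>x. x j') ` ?K))"
    by (intro card_le_prod_card_coordinates inj_on_restrict_top_keys) simp
  have "card ?K ^ c = card ?K ^ (c - 1) * card ?K"
    using c_pos by (simp add: power_eq_if)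
  also have "\<dots> \<le> ?d ^ (c - 1) * (\<Prod>j'\<in>?J. card ((\<lambda>x. x j') ` ?K))"
    using card_top_keys_le_deg \<open>card ?K \<le> (\<Prod>j'\<in>?J. _)\<close> by (intro mult_le_mono power_mono) auto
  also have "\<dots> = (\<Prod>j'\<in>?J. card ((\<lambda>x. x j') ` ?K) * ?d)"
    using card_J by (simp add: prod.distrib)
  also have "\<dots> \<le> (\<Prod>j'\<in>?J. 2 * card X)"
    using card_column_mult_deg_le by (intro prod_mono) auto
  finally show ?thesis
    using card_J i by simp
qed

lemma sum_pairs_top_keys_le:
  "(\<Sum>i\<in>cells. card (top_keys i) * (real (card (top_keys i)) - 1) / 2) \<le> real (card X) powr (2 - 1 / c)"
proof -
  have "(\<Sum>i\<in>cells. card (top_keys i) * (real (card (top_keys i)) - 1) / 2)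
      \<le> (\<Sum>i\<in>cells. card (top_keys i) * real (card X) powr (1 - 1 / c))"
    by (intro sum_mono pairs_le_mult_powr c_pos card_top_keys_power_le)
  also have "\<dots> = card X * real (card X) powr (1 - 1 / c)"
    by (simp only: sum_distrib_right[symmetric] sum_card_top_keys flip: of_nat_sum)
  also have "\<dots> = real (card X) powr (2 - 1 / c)"
    by (cases "card X = 0") (simp_all add: powr_mult_base)
  finally show ?thesis .
qed

definition tables :: "(nat \<times> nat \<Rightarrow> nat) \<Rightarrow> nat \<Rightarrow> nat \<Rightarrow> nat" where
  "tables g = (\<lambda>j\<in>{..<c}. \<lambda>\<alpha>\<in>{..<\<sigma>}. g (j, \<alpha>))"

definition collides :: "(nat \<Rightarrow> nat) \<Rightarrow> (nat \<times> nat \<Rightarrow> nat) \<Rightarrow> bool" where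
  "collides x g \<longleftrightarrow> tab_hash c (tables g) x = tab_hash c (tables g) q"

lemma tables_key: "x \<in> keys c \<sigma> \<Longrightarrow> j < c \<Longrightarrow> tables g j (x j) = g (j, x j)"
  by (simp add: tables_def key_char_lt)

lemma tab_hash_tables_cong:
  assumes "x \<in> keys c \<sigma>" "\<And>j. j < c \<Longrightarrow> g (j, x j) = g' (j, x j)"
  shows "tab_hash c (tables g) x = tab_hash c (tables g') x"
  using assms by (intro tab_hash_cong) (simp add: tables_key)

lemma collides_local:
  assumes "x \<in> X" "\<forall>i\<in>probed x. g i = g' i"
  shows "collides x g = collides x g'"
proof -
  have "tab_hash c (tables g) x = tab_hash c (tables g') x"
    using assms X_keys by (intro tab_hash_tables_cong) (auto simp: probed_def)
  moreover have "tab_hash c (tables g) q = tab_hash c (tables g') q"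
    using assms(2) q_key by (intro tab_hash_tables_cong) (auto simp: probed_def)
  ultimately show ?thesis
    by (simp add: collides_def)
qed

lemma collides_pinned:
  assumes "x \<in> X" "i \<in> probed x" "\<forall>p\<in>probed x. rank p \<le> rank i"
    and "collides x (g(i := v))" "collides x (g(i := v'))"
  shows "v = v'"
proof -
  have "x \<in> top_keys i"
    using assms(1-3) by (simp add: maximal_at_def)
  then obtain j where j: "j < c" "i = (j, x j)" "x j \<noteq> q j"
    by (rule top_cell)
  have x_key: "x \<in> keys c \<sigma>"
    using assms(1) X_keys by blast
  let ?G = "tables (g(i := v))" and ?G' = "tables (g(i := v'))"
  have "tab_hash c ?G q = tab_hash c ?G' q"
    using j q_key by (intro tab_hash_tables_cong) auto
  moreover have "xor (tab_hash c ?G x) (tab_hash c ?G' x) = xor (?G j (x j)) (?G' j (x j))"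
    using j x_key by (intro xor_tab_hash_eq_xor_entry) (auto simp: tables_key)
  ultimately have "xor v v' = 0"
    using assms(4,5) j x_key by (simp add: collides_def tables_key)
  then show ?thesis
    by (rule xor_eq_0_imp_eq)
qed

lemma bij_betw_tables: "bij_betw tables (PiE cells (\<lambda>_. {..<2 ^ r})) (tab_tables c \<sigma> r)"
  unfolding tables_def cells_def tab_tables_def by (rule bij_betw_uncurry_PiE)

lemma card_tab_tables: "card (tab_tables c \<sigma> r) = (2 ^ r) ^ card cells"
  using bij_betw_same_card[OF bij_betw_tables[of r]] by (simp add: card_PiE cells_def)

lemma card_no_collision_ge:
  "(\<Prod>i\<in>cells. 2 ^ r - card (top_keys i))
    \<le> card {G \<in> tab_tables c \<sigma> r. \<forall>x\<in>X. tab_hash c G x \<noteq> tab_hash c G q}"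
proof -
  let ?P = "PiE cells (\<lambda>_. {..<2 ^ r})"
  let ?good = "{g \<in> ?P. \<forall>x\<in>X. \<not> collides x g}"
  have inj: "inj_on tables ?P" and onto: "tables ` ?P = tab_tables c \<sigma> r"
    using bij_betw_tables[of r] by (simp_all add: bij_betw_def)
  have "(\<Prod>i\<in>cells. card {..<(2::nat) ^ r} - card (top_keys i)) \<le> card ?good"
    by (rule card_PiE_avoiding_ge[OF _ finite_lessThan finite_X _ collides_local collides_pinned])
       (use probed_subset_cells probed_nonempty in \<open>auto simp: cells_def\<close>)
  also have "card ?good = card (tables ` ?good)"
    by (rule card_image[symmetric], rule inj_on_subset[OF inj]) auto
  also have "tables ` ?good = {G \<in> tab_tables c \<sigma> r. \<forall>x\<in>X. tab_hash c G x \<noteq> tab_hash c G q}"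
    unfolding onto[symmetric] collides_def by blast
  finally show ?thesis
    by simp
qed

lemma collision_fraction_le:
  "card {G \<in> tab_tables c \<sigma> r. \<exists>x\<in>X. tab_hash c G x = tab_hash c G q} / card (tab_tables c \<sigma> r)
    \<le> 1 - (1 - 1 / real (2 ^ r)) ^ card X + card X powr (2 - 1 / c) / (real (2 ^ r))\<^sup>2"
proof -
  let ?T = "tab_tables c \<sigma> r" and ?n = "2 ^ r :: nat"
  let ?good = "{G \<in> ?T. \<forall>x\<in>X. tab_hash c G x \<noteq> tab_hash c G q}"
  let ?k = "\<lambda>i. card (top_keys i)"
  have fin_cells: "finite cells"
    by (simp add: cells_def)
  have "(1 - 1 / real ?n) ^ card X
      \<le> (\<Prod>i\<in>cells. real (?n - ?k i) / ?n) + (\<Sum>i\<in>cells. ?k i * (real (?k i) - 1) / (2 * (real ?n)\<^sup>2))"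
    using power_sum_le_prod_plus_sum[OF fin_cells, of ?n ?k] sum_card_top_keys by simp
  also have "(\<Prod>i\<in>cells. real (?n - ?k i) / ?n) = real (\<Prod>i\<in>cells. ?n - ?k i) / card ?T"
    by (simp add: card_tab_tables prod_dividef)
  also have "\<dots> \<le> card ?good / card ?T"
    using card_no_collision_ge[of r] by (intro divide_right_mono) (simp_all only: of_nat_le_iff of_nat_0_le_iff)
  also have "(\<Sum>i\<in>cells. ?k i * (real (?k i) - 1) / (2 * (real ?n)\<^sup>2))
      = (\<Sum>i\<in>cells. ?k i * (real (?k i) - 1) / 2) / (real ?n)\<^sup>2"
    by (simp add: sum_divide_distrib)
  also have "\<dots> \<le> card X powr (2 - 1 / c) / (real ?n)\<^sup>2"
    using sum_pairs_top_keys_le by (intro divide_right_mono) simp_all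
  finally have good: "(1 - 1 / real ?n) ^ card X - card X powr (2 - 1 / c) / (real ?n)\<^sup>2 \<le> card ?good / card ?T"
    by simp
  have "finite ?T"
    by (simp add: tab_tables_def finite_PiE)
  moreover have "{G \<in> ?T. \<exists>x\<in>X. tab_hash c G x = tab_hash c G q} = ?T - ?good"
    by blast
  ultimately have "card {G \<in> ?T. \<exists>x\<in>X. tab_hash c G x = tab_hash c G q} = card ?T - card ?good"
    by (simp add: card_Diff_subset)
  moreover have "card ?good \<le> card ?T"
    using \<open>finite ?T\<close> by (intro card_mono) auto
  moreover have "card ?T > 0"
    by (simp add: card_tab_tables)
  ultimately have "card {G \<in> ?T. \<exists>x\<in>X. tab_hash c G x = tab_hash c G q} / card ?T = 1 - card ?good / card ?T"
    by (simp add: of_nat_diff diff_divide_distrib)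
  then show ?thesis
    using good by simp
qed

end

lemma prob_bloom_query:
  "measure_pmf.prob (tab_family k c \<sigma> r) {G. bloom_query k c G X q}
    = (card {G \<in> tab_tables c \<sigma> r. \<exists>x\<in>X. tab_hash c G x = tab_hash c G q} / card (tab_tables c \<sigma> r)) ^ k"
proof -
  let ?T = "tab_tables c \<sigma> r" and ?S = "PiE {..<k} (\<lambda>_. tab_tables c \<sigma> r)"
  let ?B = "{G \<in> ?T. \<exists>x\<in>X. tab_hash c G x = tab_hash c G q}"
  have "finite ?T" "?T \<noteq> {}"
    by (simp_all add: tab_tables_def finite_PiE PiE_eq_empty_iff lessThan_empty_iff)
  then have "finite ?S" "?S \<noteq> {}"
    by (simp_all add: finite_PiE PiE_eq_empty_iff)
  moreover have "?S \<inter> {G. bloom_query k c G X q} = PiE {..<k} (\<lambda>_. ?B)"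
    unfolding bloom_query_def bloom_array_def by (auto simp: PiE_iff)
  ultimately show ?thesis
    by (simp add: tab_family_def measure_pmf_of_set card_PiE power_divide)
qed

theorem corollary2:
  fixes c \<sigma> r k :: nat and X :: "(nat \<Rightarrow> nat) set" and q :: "nat \<Rightarrow> nat"
  assumes "c \<ge> 1"
    and "X \<subseteq> keys c \<sigma>"
    and "q \<in> keys c \<sigma> - X"
  shows "measure_pmf.prob (tab_family k c \<sigma> r) {G. bloom_query k c G X q}
    \<le> ((1 - (1 - 1 / real (2^r)) ^ card X)
        + 2 * real (card X) powr (2 - 1 / real c) / (real (2^r))^2) ^ k"
proof -
  interpret tabulation_query c \<sigma> X q
    using assms by unfold_locales auto
  have "card {G \<in> tab_tables c \<sigma> r. \<exists>x\<in>X. tab_hash c G x = tab_hash c G q} / card (tab_tables c \<sigma> r)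
      \<le> (1 - (1 - 1 / real (2^r)) ^ card X) + 2 * real (card X) powr (2 - 1 / real c) / (real (2^r))^2"
  proof -
    have "real (card X) powr (2 - 1 / real c) / (real (2^r))^2
        \<le> 2 * real (card X) powr (2 - 1 / real c) / (real (2^r))^2"
      by (intro divide_right_mono) simp_all
    then show ?thesis
      using collision_fraction_le[of r] by linarith
  qed
  then show ?thesis
    unfolding prob_bloom_query by (intro power_mono) simp_all
qed

end
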